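(* There is an absolute constant $C>0$ such that the following holds. Let $R>0$ and let $r\ge 1$ be an integer; set $d=r$. Let $\Omega_1=(-1-d,\,R+d)$, let $\chi_{\Omega_1}$ be its indicator function, let $\eta_d(p)=d^{-1}\eta(p/d)$, and define the cut-off function $\zeta=\eta_d*\chi_{\Omega_1}$, i.e. $\zeta(p)=\int_{\mathbb{R}}\eta_d(p-y)\chi_{\Omega_1}(y)\,\mathrm{d}y$. Define $\psi(p)=\zeta(p)\mathrm{e}^{-p}$. Then $\psi\in C^\infty(\mathbb{R})$, $\operatorname{supp}\psi\subset[-(1+2r),\,R+2r]$, $\psi(p)=\mathrm{e}^{-p}$ for $p\in(-1,R)$, and \[ \|\psi^{(r)}\|_{L^2(\mathbb{R})}^{1/r}\le C\, r^2 . \] In particular, choosing $r\simeq\log(1/\epsilon)$ gives $\|\psi^{(r)}\|_{L^2(\mathbb{R})}^{1/r}\lesssim \log^2(1/\epsilon)$.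
   Context: $\eta$ is the mollifier $\eta(p)=C_\eta^{-1}\exp(1/(p^2-1))$ for $|p|<1$ and $\eta(p)=0$ for $|p|\ge1$, with $C_\eta=\int_{-1}^1\exp(1/(p^2-1))\,\mathrm{d}p$. $\psi^{(r)}$ is the $r$-th derivative of $\psi$. *)

theory Defs
  imports "HOL-Analysis.Analysis"
begin

definition C_eta :: real where
  "C_eta = integral {-1..1} (\<lambda>p. exp (1 / (p^2 - 1)))"

definition eta :: "real \<Rightarrow> real" where
  "eta p = (if \<bar>p\<bar> < 1 then exp (1 / (p^2 - 1)) / C_eta else 0)"

definition eta_d :: "real \<Rightarrow> real \<Rightarrow> real" where
  "eta_d d p = eta (p / d) / d"

definition zeta :: "real \<Rightarrow> real \<Rightarrow> real \<Rightarrow> real" where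
  "zeta R d p = integral UNIV (\<lambda>y. eta_d d (p - y) * indicator {-1-d<..<R+d} y)"

definition psi :: "real \<Rightarrow> nat \<Rightarrow> real \<Rightarrow> real" where
  "psi R r p = zeta R (real r) p * exp (- p)"

definition smooth_real :: "(real \<Rightarrow> real) \<Rightarrow> bool" where
  "smooth_real f \<longleftrightarrow> (\<forall>k x. ((deriv ^^ k) f) differentiable (at x))"

definition supp_real :: "(real \<Rightarrow> real) \<Rightarrow> real set" where
  "supp_real f = closure {p. f p \<noteq> 0}"

end

theory Submission
  imports Defs "HOL-Complex_Analysis.Complex_Analysis"
begin

text \<open>
  The mollifier extends holomorphically to \<open>Re (1 - z^2) > 0\<close>, and on the disc of
  radius \<open>s/6\<close> around a real \<open>p\<close>, where \<open>s = 1 - p^2\<close>, its modulus is at most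
  \<open>exp (-(2/9)/s)\<close>. Cauchy's inequality on that disc together with
  \<open>exp (-t) \<le> n!/t^n\<close> bounds its \<open>j\<close>-th derivative by \<open>(j!)^2 27^j\<close> uniformly
  in \<open>p\<close>; taking \<open>n = j + 2\<close> shows that all derivatives vanish to second order
  at \<open>\<plusminus>1\<close>, so the bump is smooth on the whole line. Since \<open>\<zeta>\<close> is the
  difference of two translates of the primitive of \<open>\<eta>\<^sub>d\<close>, its derivatives of
  order \<open>k \<ge> 1\<close> are differences of translates of derivatives of \<open>\<eta>\<^sub>d\<close>, hence
  \<open>O((27 r^2)^r)\<close> for \<open>d = r\<close> and \<open>k \<le> r\<close>. Leibniz's rule for
  \<open>\<zeta>(p) e^-p\<close> gives \<open>|\<psi>^(r)(p)| \<le> C (54 r^2)^r e^-p\<close>, and integrating its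
  square over the support \<open>[-(1+2r), R+2r]\<close> yields
  \<open>\<parallel>\<psi>^(r)\<parallel>_2 \<le> C (54 e^3 r^2)^r\<close>.
\<close>

definition deriv_seq :: "(nat \<Rightarrow> real \<Rightarrow> real) \<Rightarrow> bool" where
  "deriv_seq F \<longleftrightarrow> (\<forall>k x. (F k has_real_derivative F (Suc k) x) (at x))"

lemma deriv_seqD: "deriv_seq F \<Longrightarrow> (F k has_real_derivative F (Suc k) x) (at x)"
  by (simp add: deriv_seq_def)

lemma deriv_seq_higher_deriv:
  assumes "deriv_seq F" shows "(deriv ^^ k) (F 0) = F k"
proof (induction k)
  case (Suc k)
  have "(deriv ^^ Suc k) (F 0) = deriv (F k)" using Suc by simp
  also have "\<dots> = F (Suc k)"
    by (rule ext, rule DERIV_imp_deriv, rule deriv_seqD[OF assms])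
  finally show ?case .
qed simp

lemma deriv_seq_smooth: "deriv_seq F \<Longrightarrow> smooth_real (F 0)"
  unfolding smooth_real_def by (metis deriv_seq_higher_deriv deriv_seqD real_differentiable_def)

lemma deriv_seq_continuous_on: "deriv_seq F \<Longrightarrow> continuous_on S (F k)"
  by (meson deriv_seqD DERIV_isCont continuous_at_imp_continuous_on)

lemma deriv_seq_diff: "deriv_seq F \<Longrightarrow> deriv_seq G \<Longrightarrow> deriv_seq (\<lambda>k x. F k x - G k x)"
  unfolding deriv_seq_def by (auto intro!: derivative_eq_intros)

lemma deriv_seq_cmult: "deriv_seq F \<Longrightarrow> deriv_seq (\<lambda>k x. c * F k x)"
  unfolding deriv_seq_def by (auto intro!: derivative_eq_intros)

lemma deriv_seq_shift:
  assumes "deriv_seq F" shows "deriv_seq (\<lambda>k x. F k (x + b))"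
  unfolding deriv_seq_def
proof (intro allI)
  fix k x
  have "((\<lambda>x. F k (x + b)) has_real_derivative F (Suc k) (x + b) * 1) (at x)"
    by (rule DERIV_chain2[OF deriv_seqD[OF assms]]) (auto intro!: derivative_eq_intros)
  then show "((\<lambda>x. F k (x + b)) has_real_derivative F (Suc k) (x + b)) (at x)"
    by simp
qed

lemma deriv_seq_scale:
  assumes "deriv_seq F" shows "deriv_seq (\<lambda>k x. c ^ k * F k (c * x))"
  unfolding deriv_seq_def
proof (intro allI)
  fix k x
  have "((\<lambda>x. F k (c * x)) has_real_derivative F (Suc k) (c * x) * c) (at x)"
    by (rule DERIV_chain2[OF deriv_seqD[OF assms]]) (auto intro!: derivative_eq_intros)
  then show "((\<lambda>x. c ^ k * F k (c * x)) has_real_derivative c ^ Suc k * F (Suc k) (c * x)) (at x)"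
    by (auto intro!: derivative_eq_intros simp: algebra_simps)
qed

lemma deriv_seq_prepend:
  assumes "\<And>x. (f has_real_derivative F 0 x) (at x)" "deriv_seq F"
  shows "deriv_seq (\<lambda>k. case k of 0 \<Rightarrow> f | Suc j \<Rightarrow> F j)"
  using assms unfolding deriv_seq_def by (auto split: nat.splits)

lemma deriv_seq_exp_minus: "deriv_seq (\<lambda>k x. (-1) ^ k * exp (- x))"
  unfolding deriv_seq_def by (auto intro!: derivative_eq_intros)

lemma Leibniz_sum_Suc:
  fixes a b :: "nat \<Rightarrow> real"
  shows "(\<Sum>k\<le>n. real (n choose k) * (a (Suc k) * b (n - k) + a k * b (Suc (n - k))))
       = (\<Sum>k\<le>Suc n. real (Suc n choose k) * a k * b (Suc n - k))"
proof -
  have split: "(\<Sum>k\<le>Suc n. real (Suc n choose k) * a k * b (Suc n - k))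
      = a 0 * b (Suc n) + (\<Sum>k\<le>n. real (n choose k) * a (Suc k) * b (n - k))
        + (\<Sum>k\<le>n. real (n choose Suc k) * a (Suc k) * b (n - k))"
    by (subst sum.atMost_Suc_shift) (simp add: sum.distrib algebra_simps)
  have merge: "a 0 * b (Suc n) + (\<Sum>k\<le>n. real (n choose Suc k) * a (Suc k) * b (n - k))
      = (\<Sum>k\<le>n. real (n choose k) * a k * b (Suc (n - k)))"
  proof -
    have "a 0 * b (Suc n) + (\<Sum>k\<le>n. real (n choose Suc k) * a (Suc k) * b (n - k))
        = (\<Sum>k\<le>Suc n. real (n choose k) * a k * b (Suc n - k))"
      by (subst sum.atMost_Suc_shift) simp
    then show ?thesis by (simp add: Suc_diff_le)
  qed
  show ?thesis using split merge by (simp add: sum.distrib algebra_simps)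
qed

lemma deriv_seq_mult:
  assumes F: "deriv_seq F" and G: "deriv_seq G"
  shows "deriv_seq (\<lambda>n x. \<Sum>k\<le>n. real (n choose k) * F k x * G (n - k) x)"
  unfolding deriv_seq_def
proof (intro allI)
  fix n x
  have "((\<lambda>x. \<Sum>k\<le>n. real (n choose k) * F k x * G (n - k) x) has_real_derivative
     (\<Sum>k\<le>n. real (n choose k) * (F (Suc k) x * G (n - k) x + F k x * G (Suc (n - k)) x))) (at x)"
    by (rule DERIV_sum)
       (auto intro!: derivative_eq_intros deriv_seqD[OF F] deriv_seqD[OF G] simp: algebra_simps)
  then show "((\<lambda>x. \<Sum>k\<le>n. real (n choose k) * F k x * G (n - k) x) has_real_derivative
     (\<Sum>k\<le>Suc n. real (Suc n choose k) * F k x * G (Suc n - k) x)) (at x)"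
    using Leibniz_sum_Suc[of n "\<lambda>k. F k x" "\<lambda>k. G k x"] by simp
qed

lemma supp_real_subset_if_vanishing:
  assumes "\<And>x. x \<notin> {a..b} \<Longrightarrow> f x = 0" shows "supp_real f \<subseteq> {a..b}"
proof -
  have "{x. f x \<noteq> 0} \<subseteq> {a..b}" using assms by blast
  then show ?thesis unfolding supp_real_def by (simp add: closure_minimal)
qed

lemma square_integrable_if_vanishing:
  fixes f :: "real \<Rightarrow> real"
  assumes "continuous_on {a..b} f" and "\<And>x. x \<notin> {a..b} \<Longrightarrow> f x = 0"
  shows "(\<lambda>x. (f x)\<^sup>2) integrable_on {a..b}" and "(\<lambda>x. (f x)\<^sup>2) integrable_on UNIV"
    and "integral UNIV (\<lambda>x. (f x)\<^sup>2) = integral {a..b} (\<lambda>x. (f x)\<^sup>2)"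
proof -
  have restrict: "(\<lambda>x. (f x)\<^sup>2) = (\<lambda>x. if x \<in> {a..b} then (f x)\<^sup>2 else 0)"
    using assms(2) by auto
  show integrable: "(\<lambda>x. (f x)\<^sup>2) integrable_on {a..b}"
    by (intro integrable_continuous_interval continuous_intros assms(1))
  show "(\<lambda>x. (f x)\<^sup>2) integrable_on UNIV"
    by (subst restrict) (rule iffD2[OF integrable_restrict_UNIV integrable])
  show "integral UNIV (\<lambda>x. (f x)\<^sup>2) = integral {a..b} (\<lambda>x. (f x)\<^sup>2)"
    by (subst restrict) (rule integral_restrict_UNIV)
qed

lemma sqrt_integral_square_le_if_exp_bound:
  fixes f :: "real \<Rightarrow> real"
  assumes "a \<le> b" and "continuous_on {a..b} f" and "\<And>x. x \<notin> {a..b} \<Longrightarrow> f x = 0"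
    and bound: "\<And>x. \<bar>f x\<bar> \<le> M * exp (- x)"
  shows "sqrt (integral UNIV (\<lambda>x. (f x)\<^sup>2)) \<le> M * exp (- a)"
proof -
  note square_integrable = square_integrable_if_vanishing[OF assms(2,3)]
  have M: "0 \<le> M" using bound[of 0] by (auto intro: order_trans)
  have square_le: "(f x)\<^sup>2 \<le> M\<^sup>2 * exp (- 2 * x)" for x
  proof -
    have "\<bar>f x\<bar>\<^sup>2 \<le> (M * exp (- x))\<^sup>2" by (rule power_mono[OF bound]) simp
    then show ?thesis by (simp add: power_mult_distrib flip: exp_of_nat_mult)
  qed
  define F where "F x = - (M\<^sup>2 * exp (- 2 * x) / 2)" for x
  have exp_integral: "((\<lambda>x. M\<^sup>2 * exp (- 2 * x)) has_integral (F b - F a)) {a..b}"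
  proof (rule fundamental_theorem_of_calculus[OF assms(1)])
    fix x
    have "(F has_real_derivative M\<^sup>2 * exp (- 2 * x)) (at x)"
      unfolding F_def by (auto intro!: derivative_eq_intros)
    then show "(F has_vector_derivative M\<^sup>2 * exp (- 2 * x)) (at x within {a..b})"
      by (simp add: has_real_derivative_iff_has_vector_derivative has_vector_derivative_at_within)
  qed
  have "integral UNIV (\<lambda>x. (f x)\<^sup>2) = integral {a..b} (\<lambda>x. (f x)\<^sup>2)"
    by (rule square_integrable(3))
  also have "\<dots> \<le> integral {a..b} (\<lambda>x. M\<^sup>2 * exp (- 2 * x))"
    by (rule integral_le[OF square_integrable(1) has_integral_integrable[OF exp_integral] square_le])
  also have "\<dots> = F b - F a"
    by (rule integral_unique[OF exp_integral])
  also have "\<dots> \<le> M\<^sup>2 * exp (- 2 * a)"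
  proof -
    have "0 \<le> M\<^sup>2 * exp (- 2 * b)" "0 \<le> M\<^sup>2 * exp (- 2 * a)" by simp_all
    then show ?thesis unfolding F_def by linarith
  qed
  also have "\<dots> = (M * exp (- a))\<^sup>2"
    using exp_double[of "- a"] by (simp add: power_mult_distrib)
  finally show ?thesis using real_sqrt_le_mono M by fastforce
qed

lemma powr_inverse_le_if_le_power:
  fixes X Q Y :: real
  assumes "0 \<le> X" "X \<le> Q * Y ^ r" "Q \<ge> 1" "Y > 0" "r \<ge> 1"
  shows "X powr (1 / real r) \<le> Q * Y"
proof -
  have "X powr (1 / real r) \<le> (Q * Y ^ r) powr (1 / real r)"
    by (rule powr_mono2) (use assms in auto)
  also have "\<dots> = Q powr (1 / real r) * Y"
    using assms by (simp add: powr_mult powr_realpow[symmetric] powr_powr)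
  also have "Q powr (1 / real r) \<le> Q powr 1"
    by (rule powr_mono) (use assms in auto)
  finally show ?thesis using assms by (simp add: mult_right_mono)
qed

definition bump_complex :: "complex \<Rightarrow> complex" where
  "bump_complex z = exp (- 1 / (1 - z\<^sup>2))"

definition bump_domain :: "complex set" where
  "bump_domain = {z. 0 < Re (1 - z\<^sup>2)}"

lemma open_bump_domain: "open bump_domain"
  unfolding bump_domain_def by (intro open_Collect_less continuous_intros)

lemma holomorphic_bump_complex: "bump_complex holomorphic_on bump_domain"
proof -
  have "1 - z\<^sup>2 \<noteq> 0" if "z \<in> bump_domain" for z
    using that unfolding bump_domain_def by auto
  then show ?thesis unfolding bump_complex_def[abs_def] by (intro holomorphic_intros) auto
qed

lemma one_minus_square_pos: "\<bar>p::real\<bar> < 1 \<Longrightarrow> 0 < 1 - p\<^sup>2"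
  using abs_square_less_1[of p] by auto

lemma one_minus_square_near_real:
  fixes p :: real and z :: complex
  assumes p: "\<bar>p\<bar> < 1" and z: "norm (z - of_real p) \<le> (1 - p\<^sup>2) / 6"
  shows "Re (1 - z\<^sup>2) \<ge> (1 - p\<^sup>2) / 2" "norm (1 - z\<^sup>2) \<le> 3 * (1 - p\<^sup>2) / 2"
proof -
  define s where "s = 1 - p\<^sup>2"
  define w where "w = z - of_real p"
  have s: "0 < s" "s \<le> 1" using one_minus_square_pos[OF p] unfolding s_def by auto
  have w: "norm w \<le> s / 6" using z unfolding w_def s_def by simp
  have eq: "1 - z\<^sup>2 = of_real s - (2 * of_real p * w + w\<^sup>2)"
    unfolding w_def s_def by (simp add: algebra_simps power2_eq_square)
  have "norm (2 * of_real p * w + w\<^sup>2) \<le> 2 * \<bar>p\<bar> * norm w + norm w * norm w"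
    by (rule order_trans[OF norm_triangle_ineq]) (simp add: norm_mult norm_power power2_eq_square)
  also have "\<dots> \<le> 2 * norm w + 1 * norm w"
    using p w s by (intro add_mono mult_right_mono) auto
  also have "\<dots> \<le> s / 2" using w by simp
  finally have small: "norm (2 * of_real p * w + w\<^sup>2) \<le> s / 2" .
  then have "Re (2 * of_real p * w + w\<^sup>2) \<le> s / 2"
    using complex_Re_le_cmod order_trans by blast
  then show "Re (1 - z\<^sup>2) \<ge> (1 - p\<^sup>2) / 2" unfolding eq s_def[symmetric] by simp
  have "norm (1 - z\<^sup>2) \<le> norm (of_real s :: complex) + norm (2 * of_real p * w + w\<^sup>2)"
    unfolding eq by (rule norm_triangle_ineq4)
  then show "norm (1 - z\<^sup>2) \<le> 3 * (1 - p\<^sup>2) / 2" using small s unfolding s_def[symmetric] by simp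
qed

lemma cball_subset_bump_domain:
  "\<bar>p\<bar> < 1 \<Longrightarrow> cball (complex_of_real p) ((1 - p\<^sup>2) / 6) \<subseteq> bump_domain"
  using one_minus_square_near_real(1) one_minus_square_pos
  by (fastforce simp: bump_domain_def dist_norm norm_minus_commute)

lemma norm_bump_complex_le:
  fixes p :: real and z :: complex
  assumes p: "\<bar>p\<bar> < 1" and z: "norm (z - of_real p) \<le> (1 - p\<^sup>2) / 6"
  shows "norm (bump_complex z) \<le> exp (- (2/9) / (1 - p\<^sup>2))"
proof -
  define s where "s = 1 - p\<^sup>2"
  define u where "u = 1 - z\<^sup>2"
  have s: "0 < s" using one_minus_square_pos[OF p] unfolding s_def by auto
  have Re_u: "Re u \<ge> s / 2" and norm_u: "norm u \<le> 3 * s / 2"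
    using one_minus_square_near_real[OF p z] unfolding u_def s_def by auto
  have "0 < norm u" using Re_u s complex_Re_le_cmod[of u] by linarith
  then have "(s/2) / (3 * s / 2)\<^sup>2 \<le> Re u / (norm u)\<^sup>2"
    using Re_u norm_u s by (intro frac_le power_mono) auto
  then have "(2/9) / s \<le> Re (1 / u)"
    using s by (simp add: Re_divide' power2_eq_square field_simps)
  then show ?thesis unfolding bump_complex_def u_def[symmetric] s_def[symmetric] by simp
qed

lemma norm_higher_deriv_bump_complex_le:
  assumes p: "\<bar>p\<bar> < 1"
  shows "norm ((deriv ^^ j) bump_complex (of_real p))
           \<le> fact j * exp (- (2/9) / (1 - p\<^sup>2)) / ((1 - p\<^sup>2) / 6) ^ j"
proof (rule Cauchy_inequality)
  show "0 < (1 - p\<^sup>2) / 6" using one_minus_square_pos[OF p] by simp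
  show "bump_complex holomorphic_on ball (complex_of_real p) ((1 - p\<^sup>2) / 6)"
    using holomorphic_bump_complex cball_subset_bump_domain[OF p] ball_subset_cball
      holomorphic_on_subset by blast
  show "continuous_on (cball (complex_of_real p) ((1 - p\<^sup>2) / 6)) bump_complex"
    using holomorphic_bump_complex cball_subset_bump_domain[OF p]
      holomorphic_on_imp_continuous_on continuous_on_subset by blast
  fix x assume "norm (complex_of_real p - x) = (1 - p\<^sup>2) / 6"
  then show "norm (bump_complex x) \<le> exp (- (2/9) / (1 - p\<^sup>2))"
    by (intro norm_bump_complex_le[OF p]) (simp add: norm_minus_commute)
qed

lemma power_div_fact_le_exp:
  fixes x :: real assumes "0 \<le> x" shows "x ^ n / fact n \<le> exp x"
proof -
  have "summable (\<lambda>n. x ^ n / fact n)"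
    using summable_exp[of x] by (simp add: field_simps)
  then have "sum (\<lambda>n. x ^ n / fact n) {n} \<le> (\<Sum>n. x ^ n / fact n)"
    by (rule sum_le_suminf) (use assms in auto)
  also have "\<dots> = exp x" using exp_converges[of x] by (simp add: sums_iff field_simps)
  finally show ?thesis by simp
qed

definition bump :: "real \<Rightarrow> real" where
  "bump p = (if \<bar>p\<bar> < 1 then exp (1 / (p\<^sup>2 - 1)) else 0)"

definition bump_deriv :: "nat \<Rightarrow> real \<Rightarrow> real" where
  "bump_deriv j p = (if \<bar>p\<bar> < 1 then Re ((deriv ^^ j) bump_complex (of_real p)) else 0)"

lemma bump_deriv_0: "bump_deriv 0 = bump"
proof
  fix p
  have "- (1 / (1 - (complex_of_real p)\<^sup>2)) = 1 / ((complex_of_real p)\<^sup>2 - 1)"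
    by (metis minus_diff_eq divide_minus_right)
  then have "bump_complex (of_real p) = of_real (exp (1 / (p\<^sup>2 - 1)))"
    unfolding bump_complex_def by (simp add: exp_of_real[symmetric])
  then show "bump_deriv 0 p = bump p" by (simp add: bump_deriv_def bump_def)
qed

lemma abs_bump_deriv_le_power:
  assumes p: "\<bar>p\<bar> < 1"
  shows "\<bar>bump_deriv j p\<bar> \<le> fact j * fact (j + m) * 27 ^ j * (9/2) ^ m * (1 - p\<^sup>2) ^ m"
proof -
  define s where "s = 1 - p\<^sup>2"
  have s: "0 < s" using one_minus_square_pos[OF p] s_def by simp
  have "((2/9) / s) ^ (j + m) / fact (j + m) \<le> exp ((2/9) / s)"
    by (rule power_div_fact_le_exp) (use s in simp)
  then have exp_le: "exp (- (2/9) / s) \<le> fact (j + m) * (s * (9/2)) ^ (j + m)"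
    using s by (simp add: exp_minus field_simps power_divide)
  have "(s * (9/2)) ^ (j + m) / (s/6) ^ j = ((s * (9/2)) / (s/6)) ^ j * (s * (9/2)) ^ m"
    by (simp only: power_add power_divide times_divide_eq_left)
  also have "\<dots> = 27 ^ j * (9/2) ^ m * s ^ m"
    using s by (simp only: power_mult_distrib mult_ac) simp
  finally have powers: "(s * (9/2)) ^ (j + m) / (s/6) ^ j = 27 ^ j * (9/2) ^ m * s ^ m" .
  have "\<bar>bump_deriv j p\<bar> \<le> norm ((deriv ^^ j) bump_complex (of_real p))"
    using p by (simp add: bump_deriv_def abs_Re_le_cmod)
  also have "\<dots> \<le> fact j * exp (- (2/9) / s) / (s/6) ^ j"
    using norm_higher_deriv_bump_complex_le[OF p, of j] s_def by simp
  also have "\<dots> \<le> fact j * (fact (j + m) * (s * (9/2)) ^ (j + m)) / (s/6) ^ j"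
    by (intro divide_right_mono mult_left_mono exp_le) (use s in auto)
  also have "\<dots> = fact j * fact (j + m) * ((s * (9/2)) ^ (j + m) / (s/6) ^ j)"
    by simp
  also have "\<dots> = fact j * fact (j + m) * 27 ^ j * (9/2) ^ m * s ^ m"
    by (simp only: powers mult.assoc)
  finally show ?thesis unfolding s_def .
qed

lemma abs_bump_deriv_le: "\<bar>bump_deriv j p\<bar> \<le> fact j * fact j * 27 ^ j"
proof (cases "\<bar>p\<bar> < 1")
  case True
  then show ?thesis using abs_bump_deriv_le_power[OF True, of j 0] by simp
qed (simp add: bump_deriv_def)

lemma abs_bump_deriv_le_square_dist:
  assumes a: "a = 1 \<or> a = -1"
  shows "\<bar>bump_deriv j x\<bar> \<le> (fact j * fact (j + 2) * 27 ^ j * (9/2)\<^sup>2 * 4) * (x - a)\<^sup>2"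
proof (cases "\<bar>x\<bar> < 1")
  case True
  define K where "K = fact j * fact (j + 2) * 27 ^ j * (9/2::real)\<^sup>2"
  have "1 - x\<^sup>2 = - ((x - a) * (x + a))" using a by (auto simp: algebra_simps power2_eq_square)
  then have "\<bar>1 - x\<^sup>2\<bar> = \<bar>x - a\<bar> * \<bar>x + a\<bar>" by (simp add: abs_mult)
  also have "\<dots> \<le> \<bar>x - a\<bar> * 2" using True a by (intro mult_left_mono) auto
  finally have "\<bar>1 - x\<^sup>2\<bar>\<^sup>2 \<le> (\<bar>x - a\<bar> * 2)\<^sup>2" by (intro power_mono) auto
  then have square_le: "(1 - x\<^sup>2)\<^sup>2 \<le> 4 * (x - a)\<^sup>2" by (simp add: power_mult_distrib)
  have "\<bar>bump_deriv j x\<bar> \<le> K * (1 - x\<^sup>2)\<^sup>2"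
    using abs_bump_deriv_le_power[OF True, of j 2] by (simp add: K_def)
  also have "\<dots> \<le> K * (4 * (x - a)\<^sup>2)" by (rule mult_left_mono[OF square_le]) (simp add: K_def)
  finally show ?thesis by (simp add: K_def mult_ac)
qed (simp add: bump_deriv_def)

lemma has_real_derivative_zero_if_quadratic_bound:
  fixes f :: "real \<Rightarrow> real"
  assumes "\<And>x. \<bar>f x - f a\<bar> \<le> K * (x - a)\<^sup>2"
  shows "(f has_real_derivative 0) (at a)"
proof -
  have "((\<lambda>x. (f x - f a) / (x - a)) \<longlongrightarrow> 0) (at a)"
  proof (rule Lim_null_comparison)
    have "norm ((f x - f a) / (x - a)) \<le> K * \<bar>x - a\<bar>" for x
    proof (cases "x = a")
      case False
      have "\<bar>f x - f a\<bar> \<le> (K * \<bar>x - a\<bar>) * \<bar>x - a\<bar>"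
        using assms[of x] by (simp add: power2_eq_square)
      then show ?thesis using False by (simp add: divide_le_eq)
    qed simp
    then show "\<forall>\<^sub>F x in at a. norm ((f x - f a) / (x - a)) \<le> K * \<bar>x - a\<bar>"
      by (intro always_eventually allI)
    show "((\<lambda>x. K * \<bar>x - a\<bar>) \<longlongrightarrow> 0) (at a)"
      by (rule tendsto_eq_intros refl | simp)+
  qed
  then show ?thesis by (simp add: has_field_derivative_iff)
qed

lemma has_real_derivative_bump_deriv:
  "(bump_deriv j has_real_derivative bump_deriv (Suc j) p) (at p)"
proof -
  consider "\<bar>p\<bar> < 1" | "\<bar>p\<bar> > 1" | "p = 1 \<or> p = -1" by linarith
  then show ?thesis
  proof cases
    case 1
    have "complex_of_real p \<in> bump_domain"
      using cball_subset_bump_domain[OF 1] one_minus_square_pos[OF 1] by auto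
    then have "((deriv ^^ j) bump_complex has_field_derivative
        (deriv ^^ Suc j) bump_complex (of_real p)) (at (of_real p))"
      using holomorphic_derivI[OF holomorphic_higher_deriv[OF holomorphic_bump_complex
          open_bump_domain] open_bump_domain] by simp
    then have "((\<lambda>x. Re ((deriv ^^ j) bump_complex (of_real x))) has_real_derivative
        Re ((deriv ^^ Suc j) bump_complex (of_real p))) (at p)"
      by (intro has_field_derivative_Re has_vector_derivative_real_field) simp
    then have "(bump_deriv j has_real_derivative Re ((deriv ^^ Suc j) bump_complex (of_real p))) (at p)"
      by (rule has_field_derivative_transform_within_open[where S = "{-1<..<1}"])
         (use 1 in \<open>auto simp: bump_deriv_def\<close>)
    then show ?thesis using 1 by (simp add: bump_deriv_def)
  next
    case 2
    have "open {x::real. \<bar>x\<bar> > 1}" by (intro open_Collect_less continuous_intros)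
    then have "(bump_deriv j has_real_derivative 0) (at p)"
      by (rule has_field_derivative_transform_within_open[OF DERIV_const])
         (use 2 in \<open>auto simp: bump_deriv_def\<close>)
    then show ?thesis using 2 by (simp add: bump_deriv_def)
  next
    case 3
    then have "bump_deriv k p = 0" for k by (auto simp: bump_deriv_def)
    then have "(bump_deriv j has_real_derivative 0) (at p)"
      using abs_bump_deriv_le_square_dist[OF 3]
      by (intro has_real_derivative_zero_if_quadratic_bound) simp
    then show ?thesis using \<open>bump_deriv (Suc j) p = 0\<close> by simp
  qed
qed

lemma deriv_seq_bump_deriv: "deriv_seq bump_deriv"
  unfolding deriv_seq_def using has_real_derivative_bump_deriv by blast

lemma continuous_on_bump: "continuous_on S bump"
  using deriv_seq_continuous_on[OF deriv_seq_bump_deriv, of S 0] by (simp add: bump_deriv_0)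

definition bump_primitive :: "real \<Rightarrow> real" where
  "bump_primitive x = integral {-2..x} bump"

lemma bump_primitive_eq_0: "x \<le> -1 \<Longrightarrow> bump_primitive x = 0"
  unfolding bump_primitive_def by (subst integral_cong[of _ _ "\<lambda>_. 0"]) (auto simp: bump_def)

lemma has_real_derivative_bump_primitive: "(bump_primitive has_real_derivative bump x) (at x)"
proof (cases "x < -1")
  case True
  have "(bump_primitive has_real_derivative 0) (at x)"
    by (rule has_field_derivative_transform_within_open[OF DERIV_const, where S = "{..<-1}"])
       (use True bump_primitive_eq_0 in auto)
  then show ?thesis using True by (simp add: bump_def)
next
  case False
  have "(bump_primitive has_real_derivative bump x) (at x within {-2..x+1})"
    unfolding bump_primitive_def[abs_def]
    by (rule integral_has_real_derivative) (use False continuous_on_bump in auto)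
  moreover have "at x within {-2..x+1} = at x"
    by (rule at_within_interior) (use False in auto)
  ultimately show ?thesis by simp
qed

lemma C_eta_eq_integral_bump: "C_eta = integral {-1..1} bump"
proof -
  have "C_eta = integral {-1<..<1} (\<lambda>p. exp (1 / (p\<^sup>2 - 1)))"
    unfolding C_eta_def by (rule integral_open_interval_real)
  also have "\<dots> = integral {-1<..<1} bump"
    by (rule integral_cong) (auto simp: bump_def)
  also have "\<dots> = integral {-1..1} bump"
    by (rule integral_open_interval_real[symmetric])
  finally show ?thesis .
qed

lemma bump_primitive_eq_C_eta:
  assumes "x \<ge> 1" shows "bump_primitive x = C_eta"
proof -
  have integrable: "bump integrable_on {a..b}" for a b
    by (rule integrable_continuous_interval, rule continuous_on_bump)
  have "integral {1..x} bump = integral {1..x} (\<lambda>_. 0::real)"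
    by (rule integral_cong) (auto simp: bump_def)
  then have "integral {-1..x} bump = C_eta"
    using Henstock_Kurzweil_Integration.integral_combine[where a = "-1" and c = 1 and b = x and f = bump]
      assms integrable by (simp add: C_eta_eq_integral_bump)
  moreover have "integral {-2..-1} bump = 0"
    using bump_primitive_eq_0[of "-1"] by (simp add: bump_primitive_def)
  ultimately show ?thesis
    using Henstock_Kurzweil_Integration.integral_combine[where a = "-2" and c = "-1" and b = x and f = bump]
      assms integrable by (simp add: bump_primitive_def)
qed

lemma bump_primitive_mono: "x \<le> y \<Longrightarrow> bump_primitive x \<le> bump_primitive y"
  by (rule DERIV_nonneg_imp_nondecreasing[where f = bump_primitive])
     (use has_real_derivative_bump_primitive in \<open>force simp: bump_def\<close>)+

lemma C_eta_pos: "C_eta > 0"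
proof -
  have "bump_primitive (-1/2) < bump_primitive (1/2)"
    by (rule DERIV_pos_imp_increasing[where f = bump_primitive])
       (use has_real_derivative_bump_primitive in \<open>force simp: bump_def\<close>)+
  moreover have "bump_primitive (-1) \<le> bump_primitive (-1/2)" "bump_primitive (1/2) \<le> bump_primitive 1"
    by (auto intro: bump_primitive_mono)
  ultimately show ?thesis using bump_primitive_eq_0[of "-1"] bump_primitive_eq_C_eta[of 1] by simp
qed

lemma bump_primitive_bounds: "0 \<le> bump_primitive x \<and> bump_primitive x \<le> C_eta"
  using bump_primitive_mono[of "min x (-1)" x] bump_primitive_mono[of x "max x 1"]
    bump_primitive_eq_0[of "min x (-1)"] bump_primitive_eq_C_eta[of "max x 1"]
  by simp

lemma eta_d_eq_bump: "eta_d d p = bump (p / d) / (C_eta * d)"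
  by (simp add: eta_d_def eta_def bump_def)

definition mollifier_cdf :: "real \<Rightarrow> real \<Rightarrow> real" where
  "mollifier_cdf d x = bump_primitive (x / d) / C_eta"

lemma has_real_derivative_mollifier_cdf:
  assumes "d \<noteq> 0" shows "(mollifier_cdf d has_real_derivative eta_d d x) (at x)"
proof -
  have "((\<lambda>x. bump_primitive (x / d)) has_real_derivative bump (x / d) * (1 / d)) (at x)"
    by (rule DERIV_chain2[OF has_real_derivative_bump_primitive])
       (use assms in \<open>auto intro!: derivative_eq_intros\<close>)
  then have "((\<lambda>x. bump_primitive (x / d) / C_eta) has_real_derivative bump (x / d) * (1 / d) / C_eta) (at x)"
    by (rule DERIV_cdivide)
  then show ?thesis unfolding mollifier_cdf_def[abs_def] eta_d_eq_bump using assms by (simp add: field_simps)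
qed

lemma mollifier_cdf_bounds: "0 \<le> mollifier_cdf d x \<and> mollifier_cdf d x \<le> 1"
  using bump_primitive_bounds[of "x / d"] C_eta_pos by (simp add: mollifier_cdf_def)

lemma mollifier_cdf_eq_0: "d > 0 \<Longrightarrow> x \<le> -d \<Longrightarrow> mollifier_cdf d x = 0"
  by (simp add: mollifier_cdf_def bump_primitive_eq_0 divide_le_eq)

lemma mollifier_cdf_eq_1: "d > 0 \<Longrightarrow> x \<ge> d \<Longrightarrow> mollifier_cdf d x = 1"
  using C_eta_pos by (simp add: mollifier_cdf_def bump_primitive_eq_C_eta le_divide_eq)

lemma zeta_eq_mollifier_cdf_diff:
  assumes "-1 - d \<le> R + d" and "d \<noteq> 0"
  shows "zeta R d p = mollifier_cdf d (p + 1 + d) - mollifier_cdf d (p - R - d)"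
proof -
  have "zeta R d p = integral UNIV (\<lambda>y. if y \<in> {-1-d<..<R+d} then eta_d d (p - y) else 0)"
    unfolding zeta_def by (rule arg_cong[where f = "integral UNIV"]) (auto simp: indicator_def)
  also have "\<dots> = integral {-1-d<..<R+d} (\<lambda>y. eta_d d (p - y))"
    by (rule integral_restrict_UNIV)
  also have "\<dots> = integral {-1-d..R+d} (\<lambda>y. eta_d d (p - y))"
    by (rule integral_open_interval_real[symmetric])
  also have "\<dots> = (- mollifier_cdf d (p - (R + d))) - (- mollifier_cdf d (p - (-1-d)))"
  proof (rule integral_unique, rule fundamental_theorem_of_calculus[OF assms(1)])
    fix y
    have "((\<lambda>y. - mollifier_cdf d (p - y)) has_real_derivative - (eta_d d (p - y) * (-1))) (at y)"
      by (intro DERIV_minus DERIV_chain2[OF has_real_derivative_mollifier_cdf[OF assms(2)]])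
         (auto intro!: derivative_eq_intros)
    then show "((\<lambda>y. - mollifier_cdf d (p - y)) has_vector_derivative eta_d d (p - y))
        (at y within {-1 - d..R + d})"
      by (simp add: has_real_derivative_iff_has_vector_derivative has_vector_derivative_at_within)
  qed
  finally show ?thesis by (simp add: algebra_simps)
qed

definition eta_d_derivs :: "real \<Rightarrow> nat \<Rightarrow> real \<Rightarrow> real" where
  "eta_d_derivs d k x = (1 / d) ^ k * bump_deriv k (x / d) / (C_eta * d)"

lemma deriv_seq_eta_d_derivs: "deriv_seq (eta_d_derivs d)"
proof -
  have "deriv_seq (\<lambda>k x. 1 / (C_eta * d) * ((1 / d) ^ k * bump_deriv k (1 / d * x)))"
    by (intro deriv_seq_cmult deriv_seq_scale deriv_seq_bump_deriv)
  then show ?thesis by (simp add: eta_d_derivs_def[abs_def])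
qed

lemma eta_d_derivs_0: "eta_d_derivs d 0 = eta_d d"
  by (rule ext) (simp add: eta_d_derivs_def eta_d_eq_bump bump_deriv_0)

lemma eta_d_derivs_eq_0: "d > 0 \<Longrightarrow> \<bar>x\<bar> \<ge> d \<Longrightarrow> eta_d_derivs d k x = 0"
  by (simp add: eta_d_derivs_def bump_deriv_def abs_divide le_divide_eq)

lemma abs_eta_d_derivs_le:
  assumes "d \<ge> 1" shows "\<bar>eta_d_derivs d k x\<bar> \<le> fact k * fact k * 27 ^ k / C_eta"
proof -
  have "\<bar>eta_d_derivs d k x\<bar> = \<bar>1 / d\<bar> ^ k * \<bar>bump_deriv k (x / d)\<bar> / (C_eta * d)"
    using assms C_eta_pos by (simp add: eta_d_derivs_def abs_mult power_abs)
  also have "\<dots> \<le> 1 * (fact k * fact k * 27 ^ k) / (C_eta * 1)"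
    using assms C_eta_pos
    by (intro frac_le mult_mono abs_bump_deriv_le mult_left_mono) (auto simp: power_le_one)
  finally show ?thesis by simp
qed

definition zeta_derivs :: "real \<Rightarrow> real \<Rightarrow> nat \<Rightarrow> real \<Rightarrow> real" where
  "zeta_derivs R d k = (case k of
     0 \<Rightarrow> zeta R d
   | Suc j \<Rightarrow> (\<lambda>x. eta_d_derivs d j (x + 1 + d) - eta_d_derivs d j (x - R - d)))"

lemma deriv_seq_zeta_derivs:
  assumes "-1 - d \<le> R + d" and "d \<noteq> 0"
  shows "deriv_seq (zeta_derivs R d)"
  unfolding zeta_derivs_def[abs_def]
proof (rule deriv_seq_prepend)
  fix x
  have "((\<lambda>p. mollifier_cdf d (p + 1 + d) - mollifier_cdf d (p - R - d)) has_real_derivative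
      eta_d d (x + 1 + d) * 1 - eta_d d (x - R - d) * 1) (at x)"
    by (intro DERIV_diff DERIV_chain2[OF has_real_derivative_mollifier_cdf[OF assms(2)]])
       (auto intro!: derivative_eq_intros)
  moreover have "zeta R d = (\<lambda>p. mollifier_cdf d (p + 1 + d) - mollifier_cdf d (p - R - d))"
    using zeta_eq_mollifier_cdf_diff[OF assms] by blast
  ultimately show "(zeta R d has_real_derivative
      eta_d_derivs d 0 (x + 1 + d) - eta_d_derivs d 0 (x - R - d)) (at x)"
    by (simp add: eta_d_derivs_0)
  have "deriv_seq (\<lambda>k x. eta_d_derivs d k (x + (1 + d)) - eta_d_derivs d k (x + (- R - d)))"
    by (intro deriv_seq_diff deriv_seq_shift deriv_seq_eta_d_derivs)
  moreover have "(\<lambda>k x. eta_d_derivs d k (x + (1 + d)) - eta_d_derivs d k (x + (- R - d)))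
      = (\<lambda>j x. eta_d_derivs d j (x + 1 + d) - eta_d_derivs d j (x - R - d))"
    by (simp add: algebra_simps)
  ultimately show "deriv_seq (\<lambda>j x. eta_d_derivs d j (x + 1 + d) - eta_d_derivs d j (x - R - d))"
    by simp
qed

lemma zeta_bounds:
  assumes "d > 0" "R > 0"
  shows "\<bar>zeta R d x\<bar> \<le> 1"
    and "x \<le> -1 - 2 * d \<or> x \<ge> R + 2 * d \<Longrightarrow> zeta R d x = 0"
    and "x \<in> {-1<..<R} \<Longrightarrow> zeta R d x = 1"
  using assms mollifier_cdf_bounds[of d "x + 1 + d"] mollifier_cdf_bounds[of d "x - R - d"]
  by (auto simp: zeta_eq_mollifier_cdf_diff mollifier_cdf_eq_0 mollifier_cdf_eq_1)

lemma zeta_derivs_eq_0: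
  assumes "d > 0" "R > 0" "x \<le> -1 - 2 * d \<or> x \<ge> R + 2 * d"
  shows "zeta_derivs R d k x = 0"
  using assms zeta_bounds(2)[OF assms(1,2)]
  by (auto simp: zeta_derivs_def eta_d_derivs_eq_0 split: nat.splits)

definition cutoff_const :: real where
  "cutoff_const = max 1 (2 / C_eta)"

lemma abs_zeta_derivs_le:
  assumes "R > 0" "r \<ge> 1" "k \<le> r"
  shows "\<bar>zeta_derivs R (real r) k x\<bar> \<le> cutoff_const * (27 * real r ^ 2) ^ r"
proof (cases k)
  case 0
  have "1 \<le> (27 * real r ^ 2) ^ r"
    using assms by (intro one_le_power) (simp add: one_le_power order_trans[of 1 "real r ^ 2"])
  then have "1 \<le> cutoff_const * (27 * real r ^ 2) ^ r"
    by (metis cutoff_const_def max.cobounded1 mult_mono' mult_1 zero_le_one)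
  then show ?thesis
    using zeta_bounds(1)[of "real r" R x] assms 0 by (simp add: zeta_derivs_def)
next
  case (Suc j)
  then have j: "j < r" using assms by simp
  have "fact j \<le> real (j ^ j)" by (rule fact_le_power)
  also have "\<dots> \<le> real r ^ j" using j by (simp add: power_mono)
  also have "\<dots> \<le> real r ^ r" using j by (intro power_increasing) auto
  finally have fact_le: "fact j \<le> real r ^ r" .
  have "\<bar>zeta_derivs R (real r) k x\<bar>
      \<le> \<bar>eta_d_derivs r j (x + 1 + r)\<bar> + \<bar>eta_d_derivs r j (x - R - r)\<bar>"
    by (simp add: zeta_derivs_def Suc abs_triangle_ineq4)
  also have "\<dots> \<le> (2 / C_eta) * (fact j * fact j * 27 ^ j)"
    using abs_eta_d_derivs_le[of "real r" j "x + 1 + r"] abs_eta_d_derivs_le[of "real r" j "x - R - r"]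
      assms by simp
  also have "\<dots> \<le> cutoff_const * (real r ^ r * real r ^ r * 27 ^ r)"
    using fact_le j by (intro mult_mono) (auto simp: cutoff_const_def)
  also have "\<dots> = cutoff_const * (27 * real r ^ 2) ^ r"
    by (simp add: power_mult_distrib power_mult[symmetric] power2_eq_square mult_ac)
  finally show ?thesis .
qed

definition psi_derivs :: "real \<Rightarrow> real \<Rightarrow> nat \<Rightarrow> real \<Rightarrow> real" where
  "psi_derivs R d n x = (\<Sum>k\<le>n. real (n choose k) * zeta_derivs R d k x * ((-1) ^ (n - k) * exp (- x)))"

lemma deriv_seq_psi_derivs:
  assumes "-1 - d \<le> R + d" and "d \<noteq> 0"
  shows "deriv_seq (psi_derivs R d)"
  unfolding psi_derivs_def[abs_def]
  by (rule deriv_seq_mult[OF deriv_seq_zeta_derivs[OF assms] deriv_seq_exp_minus])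

lemma psi_derivs_0: "psi_derivs R (real r) 0 = psi R r"
  by (rule ext) (simp add: psi_derivs_def psi_def zeta_derivs_def)

lemma psi_derivs_vanish:
  assumes "d > 0" "R > 0" "x \<notin> {-(1 + 2 * d) .. R + 2 * d}"
  shows "psi_derivs R d n x = 0"
proof -
  have "x \<le> -1 - 2 * d \<or> x \<ge> R + 2 * d" using assms(3) by auto
  then show ?thesis by (simp add: psi_derivs_def zeta_derivs_eq_0[OF assms(1,2)])
qed

lemma square_integrable_psi_derivs:
  assumes "d > 0" "R > 0"
  shows "(\<lambda>p. (psi_derivs R d n p)\<^sup>2) integrable_on UNIV"
  using assms
  by (intro square_integrable_if_vanishing(2)[OF deriv_seq_continuous_on psi_derivs_vanish]
        deriv_seq_psi_derivs) auto

lemma abs_psi_derivs_le: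
  assumes "R > 0" "r \<ge> 1"
  shows "\<bar>psi_derivs R (real r) r x\<bar> \<le> cutoff_const * (54 * real r ^ 2) ^ r * exp (- x)"
proof -
  define B where "B = cutoff_const * (27 * real r ^ 2) ^ r"
  have "\<bar>psi_derivs R (real r) r x\<bar>
      \<le> (\<Sum>k\<le>r. \<bar>real (r choose k) * zeta_derivs R (real r) k x * ((-1) ^ (r - k) * exp (- x))\<bar>)"
    unfolding psi_derivs_def by (rule sum_abs)
  also have "\<dots> \<le> (\<Sum>k\<le>r. real (r choose k) * (B * exp (- x)))"
  proof (rule sum_mono)
    fix k assume "k \<in> {..r}"
    then have "\<bar>zeta_derivs R (real r) k x\<bar> * exp (- x) \<le> B * exp (- x)"
      using abs_zeta_derivs_le[OF assms] by (simp add: B_def)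
    then show "\<bar>real (r choose k) * zeta_derivs R (real r) k x * ((-1) ^ (r - k) * exp (- x))\<bar>
        \<le> real (r choose k) * (B * exp (- x))"
      by (simp add: abs_mult mult_left_mono mult.assoc)
  qed
  also have "\<dots> = (\<Sum>k\<le>r. real (r choose k)) * (B * exp (- x))"
    by (rule sum_distrib_right[symmetric])
  also have "(\<Sum>k\<le>r. real (r choose k)) = 2 ^ r"
    using choose_row_sum[of r] by (metis of_nat_numeral of_nat_power of_nat_sum)
  also have "2 ^ r * (B * exp (- x)) = cutoff_const * (54 * real r ^ 2) ^ r * exp (- x)"
  proof -
    have "(2::real) ^ r * 27 ^ r = 54 ^ r" by (simp flip: power_mult_distrib)
    then show ?thesis by (simp add: B_def power_mult_distrib mult_ac)
  qed
  finally show ?thesis .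
qed

lemma sqrt_integral_square_psi_derivs_le:
  assumes R: "R > 0" and r: "r \<ge> 1"
  shows "sqrt (integral UNIV (\<lambda>p. (psi_derivs R r r p)\<^sup>2)) \<le> cutoff_const * (54 * exp 3 * real r ^ 2) ^ r"
proof -
  have derivs: "deriv_seq (psi_derivs R r)"
    using R r by (intro deriv_seq_psi_derivs) auto
  have vanish: "psi_derivs R r r x = 0" if "x \<notin> {-(1 + 2 * real r) .. R + 2 * real r}" for x
    using that R r by (intro psi_derivs_vanish) auto
  have "sqrt (integral UNIV (\<lambda>p. (psi_derivs R r r p)\<^sup>2))
      \<le> cutoff_const * (54 * real r ^ 2) ^ r * exp (1 + 2 * real r)"
    using sqrt_integral_square_le_if_exp_bound[where a = "-(1 + 2 * real r)" and b = "R + 2 * real r",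
        OF _ deriv_seq_continuous_on[OF derivs] vanish abs_psi_derivs_le[OF R r]] R
    by (simp add: add.commute)
  also have "\<dots> \<le> cutoff_const * (54 * real r ^ 2) ^ r * exp 3 ^ r"
    using r by (intro mult_left_mono) (auto simp: cutoff_const_def simp flip: exp_of_nat_mult)
  also have "\<dots> = cutoff_const * (54 * exp 3 * real r ^ 2) ^ r"
    by (simp add: power_mult_distrib mult_ac)
  finally show ?thesis .
qed

theorem mainTheorem2:
  shows "\<exists>C>0. \<forall>R>0. \<forall>r::nat. r \<ge> 1 \<longrightarrow>
     smooth_real (psi R r)
   \<and> supp_real (psi R r) \<subseteq> {-(1 + 2 * real r) .. R + 2 * real r}
   \<and> (\<forall>p\<in>{-1<..<R}. psi R r p = exp (- p))
   \<and> (\<lambda>p. ((deriv ^^ r) (psi R r) p)^2) integrable_on UNIV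
   \<and> (sqrt (integral UNIV (\<lambda>p. ((deriv ^^ r) (psi R r) p)^2))) powr (1 / real r)
        \<le> C * (real r)^2"
proof (intro exI[of _ "cutoff_const * (54 * exp 3)"] conjI allI impI)
  show "0 < cutoff_const * (54 * exp 3)" by (simp add: cutoff_const_def)
  fix R :: real and r :: nat
  assume R: "R > 0" and r: "r \<ge> 1"
  have derivs: "deriv_seq (psi_derivs R r)"
    using R r by (intro deriv_seq_psi_derivs) auto
  have higher_deriv: "(deriv ^^ k) (psi R r) = psi_derivs R r k" for k
    using deriv_seq_higher_deriv[OF derivs, of k] by (simp add: psi_derivs_0)
  show "smooth_real (psi R r)"
    using deriv_seq_smooth[OF derivs] by (simp add: psi_derivs_0)
  show "supp_real (psi R r) \<subseteq> {-(1 + 2 * real r) .. R + 2 * real r}"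
    using psi_derivs_vanish[of "real r" R _ 0] R r
    by (intro supp_real_subset_if_vanishing) (simp add: psi_derivs_0)
  show "\<forall>p\<in>{-1<..<R}. psi R r p = exp (- p)"
    using zeta_bounds(3)[of "real r" R] R r by (simp add: psi_def)
  have integrable: "(\<lambda>p. (psi_derivs R r r p)\<^sup>2) integrable_on UNIV"
    using R r by (intro square_integrable_psi_derivs) auto
  then show "(\<lambda>p. ((deriv ^^ r) (psi R r) p)^2) integrable_on UNIV"
    unfolding higher_deriv .
  have "0 \<le> integral UNIV (\<lambda>p. (psi_derivs R r r p)\<^sup>2)"
    by (rule integral_nonneg[OF integrable]) simp
  then show "(sqrt (integral UNIV (\<lambda>p. ((deriv ^^ r) (psi R r) p)^2))) powr (1 / real r)
      \<le> cutoff_const * (54 * exp 3) * (real r)^2"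
    unfolding higher_deriv using r sqrt_integral_square_psi_derivs_le[OF R r]
    by (intro order_trans[OF powr_inverse_le_if_le_power]) (auto simp: cutoff_const_def mult_ac)
qed

end
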